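(* Let $d,f\in\mathbb{C}$ with $f\neq 0$, and let $\tau_1:T_4\to\mathrm{GL}_5(\mathbb{C})$ be defined by $\tau_1(s_i)=\mathrm{diag}(I_{i-1},M_1,I_{3-i})$ for $1\leq i\leq 3$, where $M_1=\begin{pmatrix}1&0&0\\ d&-1&f\\ 0&0&1\end{pmatrix}$. Then $\tau_1$ has a composition factor $\tau_1^{(1)}:T_4\to\mathrm{GL}_3(\mathbb{C})$ given by $$\tau_1^{(1)}(s_1)=\begin{pmatrix}-1&f&0\\ 0&1&0\\ 0&0&1\end{pmatrix},\quad \tau_1^{(1)}(s_2)=\begin{pmatrix}1&0&0\\ d&-1&f\\ 0&0&1\end{pmatrix},\quad \tau_1^{(1)}(s_3)=\begin{pmatrix}1&0&0\\ 0&1&0\\ 0&d&-1\end{pmatrix}.$$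
   Context: The twin group $T_4$ is the group with generators $s_1,s_2,s_3$ and defining relations $s_i^2=1$ for $1\leq i\leq 3$ and $s_1s_3=s_3s_1$. $\mathrm{diag}(A,B,C)$ denotes a block-diagonal matrix and $I_r$ the $r\times r$ identity matrix ($I_0$ empty). A composition factor means a subquotient representation (quotient of an invariant subspace by a smaller invariant subspace). *)

theory Defs
  imports "Jordan_Normal_Form.Matrix"
begin

definition M1 :: "complex \<Rightarrow> complex \<Rightarrow> complex mat" where
  "M1 d f = mat_of_rows_list 3 [[1, 0, 0], [d, -1, f], [0, 0, 1]]"

text \<open>diag(I_{i-1}, M, I_{3-i}) as a 5x5 matrix (0-based row/column indices),
  for i in {1,2,3} and M a 3x3 matrix.\<close>
definition blockdiag5 :: "nat \<Rightarrow> complex mat \<Rightarrow> complex mat" where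
  "blockdiag5 i M = mat 5 5 (\<lambda>(r, c).
     if i - 1 \<le> r \<and> r \<le> i + 1 \<and> i - 1 \<le> c \<and> c \<le> i + 1
     then M $$ (r - (i - 1), c - (i - 1))
     else (if r = c then 1 else 0))"

definition tau1 :: "complex \<Rightarrow> complex \<Rightarrow> nat \<Rightarrow> complex mat" where
  "tau1 d f i = blockdiag5 i (M1 d f)"

definition tau1_1 :: "complex \<Rightarrow> complex \<Rightarrow> nat \<Rightarrow> complex mat" where
  "tau1_1 d f i =
    (if i = 1 then mat_of_rows_list 3 [[-1, f, 0], [0, 1, 0], [0, 0, 1]]
     else if i = 2 then mat_of_rows_list 3 [[1, 0, 0], [d, -1, f], [0, 0, 1]]
     else mat_of_rows_list 3 [[1, 0, 0], [0, 1, 0], [0, d, -1]])"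

definition csubspace :: "nat \<Rightarrow> complex vec set \<Rightarrow> bool" where
  "csubspace n V \<longleftrightarrow> V \<subseteq> carrier_vec n \<and> 0\<^sub>v n \<in> V \<and>
     (\<forall>x\<in>V. \<forall>y\<in>V. x + y \<in> V) \<and> (\<forall>c. \<forall>x\<in>V. c \<cdot>\<^sub>v x \<in> V)"

text \<open>Subspace invariant under all tau_1(s_i), i.e. a subrepresentation of tau_1
  (the s_i generate T_4).\<close>
definition tau1_invariant :: "complex \<Rightarrow> complex \<Rightarrow> complex vec set \<Rightarrow> bool" where
  "tau1_invariant d f V \<longleftrightarrow> (\<forall>i\<in>{1,2,3::nat}. \<forall>v\<in>V. tau1 d f i *\<^sub>v v \<in> V)"

definition lincomb3 :: "complex \<Rightarrow> complex \<Rightarrow> complex \<Rightarrow> complex vec \<Rightarrow> complex vec \<Rightarrow> complex vec \<Rightarrow> complex vec" where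
  "lincomb3 c1 c2 c3 b1 b2 b3 = c1 \<cdot>\<^sub>v b1 + c2 \<cdot>\<^sub>v b2 + c3 \<cdot>\<^sub>v b3"

text \<open>tau_1 has a composition factor V/W (W \<subseteq> V invariant subspaces) such that,
  w.r.t. the basis b1+W, b2+W, b3+W of V/W, the induced action of s_i has matrix A i
  (acting on coordinate column vectors: s_i(b_j) = sum_k (A i)_{kj} b_k mod W).\<close>
definition has_composition_factor :: "complex \<Rightarrow> complex \<Rightarrow> (nat \<Rightarrow> complex mat) \<Rightarrow> bool" where
  "has_composition_factor d f A \<longleftrightarrow>
    (\<exists>V W b1 b2 b3.
       csubspace 5 V \<and> csubspace 5 W \<and> W \<subseteq> V \<and>
       tau1_invariant d f V \<and> tau1_invariant d f W \<and>
       b1 \<in> V \<and> b2 \<in> V \<and> b3 \<in> V \<and>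
       (\<forall>c1 c2 c3. lincomb3 c1 c2 c3 b1 b2 b3 \<in> W \<longrightarrow> c1 = 0 \<and> c2 = 0 \<and> c3 = 0) \<and>
       (\<forall>v\<in>V. \<exists>c1 c2 c3. v - lincomb3 c1 c2 c3 b1 b2 b3 \<in> W) \<and>
       (\<forall>i\<in>{1,2,3::nat}.
          tau1 d f i *\<^sub>v b1 - lincomb3 (A i $$ (0,0)) (A i $$ (1,0)) (A i $$ (2,0)) b1 b2 b3 \<in> W \<and>
          tau1 d f i *\<^sub>v b2 - lincomb3 (A i $$ (0,1)) (A i $$ (1,1)) (A i $$ (2,1)) b1 b2 b3 \<in> W \<and>
          tau1 d f i *\<^sub>v b3 - lincomb3 (A i $$ (0,2)) (A i $$ (1,2)) (A i $$ (2,2)) b1 b2 b3 \<in> W))"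

end

theory Submission
  imports Defs
begin

text \<open>Rows 0 and 4 of every \<open>tau1 d f i\<close> are rows of the identity matrix, so the vectors
  vanishing in these coordinates form a subrepresentation, spanned by the unit vectors
  \<open>e\<^sub>1, e\<^sub>2, e\<^sub>3\<close> (zero-based indices). The matrices of \<open>s\<^sub>i\<close> in this basis are
  exactly \<open>tau1_1 d f i\<close>, so the composition factor is this subspace modulo zero.\<close>

lemma dim_tau1 [simp]: "dim_row (tau1 d f i) = 5" "dim_col (tau1 d f i) = 5"
  unfolding tau1_def blockdiag5_def by simp_all

lemma tau1_mult_vec_index:
  assumes v: "v \<in> carrier_vec 5" and r: "r < 5" and i: "i \<in> {1, 2, 3}"
  shows "(tau1 d f i *\<^sub>v v) $ r =
    (if r = i then d * v $ (i - 1) - v $ i + f * v $ (i + 1) else v $ r)"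
proof -
  have "(tau1 d f i *\<^sub>v v) $ r = (\<Sum>c<5. tau1 d f i $$ (r, c) * v $ c)"
    using v r by (simp add: scalar_prod_def atLeast0LessThan mult.commute)
  also have "\<dots> = tau1 d f i $$ (r, 0) * v $ 0 + tau1 d f i $$ (r, 1) * v $ 1
      + tau1 d f i $$ (r, 2) * v $ 2 + tau1 d f i $$ (r, 3) * v $ 3 + tau1 d f i $$ (r, 4) * v $ 4"
    by (simp add: eval_nat_numeral)
  finally show ?thesis
    using r i by (auto simp: less_Suc_eq eval_nat_numeral tau1_def blockdiag5_def M1_def
      mat_of_rows_list_def)
qed

lemma tau1_mult_vec_outer:
  assumes v: "v \<in> carrier_vec 5" and i: "i \<in> {1, 2, 3}" and r: "r \<in> {0, 4}"
  shows "(tau1 d f i *\<^sub>v v) $ r = v $ r"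
proof -
  have "r \<noteq> i" "r < 5" using i r by auto
  then show ?thesis using tau1_mult_vec_index[OF v _ i] by presburger
qed

lemma has_composition_factor_of_invariant_subspace:
  fixes b :: "nat \<Rightarrow> complex vec"
  assumes V: "csubspace 5 V" "tau1_invariant d f V"
    and b_in: "\<And>j. j < 3 \<Longrightarrow> b j \<in> V"
    and indep: "\<And>c1 c2 c3. lincomb3 c1 c2 c3 (b 0) (b 1) (b 2) = 0\<^sub>v 5 \<Longrightarrow>
      c1 = 0 \<and> c2 = 0 \<and> c3 = 0"
    and span: "\<And>v. v \<in> V \<Longrightarrow> \<exists>c1 c2 c3. v = lincomb3 c1 c2 c3 (b 0) (b 1) (b 2)"
    and action: "\<And>i j. i \<in> {1, 2, 3} \<Longrightarrow> j < 3 \<Longrightarrow>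
      tau1 d f i *\<^sub>v b j =
        lincomb3 (A i $$ (0, j)) (A i $$ (1, j)) (A i $$ (2, j)) (b 0) (b 1) (b 2)"
  shows "has_composition_factor d f A"
proof -
  have b_carrier: "b j \<in> carrier_vec 5" if "j < 3" for j
    using V(1) b_in[OF that] unfolding csubspace_def by blast
  have lincomb_carrier: "lincomb3 c1 c2 c3 (b 0) (b 1) (b 2) \<in> carrier_vec 5" for c1 c2 c3
    using b_carrier[of 0] b_carrier[of 1] b_carrier[of 2] unfolding lincomb3_def by simp
  have minus_zero_iff: "x - y \<in> {0\<^sub>v 5} \<longleftrightarrow> x = y"
    if "x \<in> carrier_vec 5" "y \<in> carrier_vec 5" for x y :: "complex vec"
    using that
    by (metis comm_add_vec minus_add_minus_vec minus_cancel_vec singleton_iff uminus_eq_vec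
        zero_minus_vec)
  have zero_space: "csubspace 5 {0\<^sub>v 5}" "tau1_invariant d f {0\<^sub>v 5}"
    by (auto simp: csubspace_def tau1_invariant_def scalar_prod_def intro!: eq_vecI)
  have zero_in_V: "{0\<^sub>v 5} \<subseteq> V"
    using V(1) unfolding csubspace_def by blast
  have indep_mod_zero: "\<forall>c1 c2 c3. lincomb3 c1 c2 c3 (b 0) (b 1) (b 2) \<in> {0\<^sub>v 5} \<longrightarrow>
      c1 = 0 \<and> c2 = 0 \<and> c3 = 0"
    using indep by blast
  have span_mod_zero: "\<forall>v\<in>V. \<exists>c1 c2 c3. v - lincomb3 c1 c2 c3 (b 0) (b 1) (b 2) \<in> {0\<^sub>v 5}"
    using span minus_zero_iff lincomb_carrier by metis
  have action_mod_zero: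
    "tau1 d f i *\<^sub>v b j - lincomb3 (A i $$ (0, j)) (A i $$ (1, j)) (A i $$ (2, j)) (b 0) (b 1) (b 2)
      \<in> {0\<^sub>v 5}"
    if "i \<in> {1, 2, 3}" "j < 3" for i j
    using action[OF that] minus_zero_iff lincomb_carrier by metis
  show ?thesis
    unfolding has_composition_factor_def
    using V zero_space zero_in_V b_in[of 0] b_in[of 1] b_in[of 2] indep_mod_zero span_mod_zero
      action_mod_zero[of _ 0] action_mod_zero[of _ 1] action_mod_zero[of _ 2]
    by (intro exI[of _ V] exI[of _ "{0\<^sub>v 5}"] exI[of _ "b 0"] exI[of _ "b 1"] exI[of _ "b 2"]) simp
qed

definition middle_subspace :: "complex vec set" where
  "middle_subspace = {v \<in> carrier_vec 5. v $ 0 = 0 \<and> v $ 4 = 0}"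

lemma csubspace_middle_subspace: "csubspace 5 middle_subspace"
  unfolding csubspace_def
proof (intro conjI ballI allI)
  show "middle_subspace \<subseteq> carrier_vec 5" "0\<^sub>v 5 \<in> middle_subspace"
    unfolding middle_subspace_def by auto
  show "x + y \<in> middle_subspace" if "x \<in> middle_subspace" "y \<in> middle_subspace" for x y
    using that unfolding middle_subspace_def by auto
  show "c \<cdot>\<^sub>v x \<in> middle_subspace" if "x \<in> middle_subspace" for c x
    using that unfolding middle_subspace_def by auto
qed

lemma tau1_invariant_middle_subspace: "tau1_invariant d f middle_subspace"
  unfolding tau1_invariant_def
proof (intro ballI)
  fix i :: nat and v assume i: "i \<in> {1, 2, 3}" and "v \<in> middle_subspace"
  then have v: "v \<in> carrier_vec 5" "v $ 0 = 0" "v $ 4 = 0"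
    by (simp_all add: middle_subspace_def)
  have "(tau1 d f i *\<^sub>v v) $ 0 = v $ 0" "(tau1 d f i *\<^sub>v v) $ 4 = v $ 4"
    by (rule tau1_mult_vec_outer[OF v(1) i], simp)+
  moreover have "tau1 d f i *\<^sub>v v \<in> carrier_vec 5"
    by (intro carrier_vecI) simp
  ultimately show "tau1 d f i *\<^sub>v v \<in> middle_subspace"
    using v unfolding middle_subspace_def by simp
qed

lemma dim_lincomb3 [simp]: "dim_vec (lincomb3 c1 c2 c3 b1 b2 b3) = dim_vec b3"
  by (simp add: lincomb3_def)

lemma lincomb3_unit_vec:
  "lincomb3 c1 c2 c3 (unit_vec 5 1) (unit_vec 5 2) (unit_vec 5 3) =
    vec 5 (\<lambda>r. if r = 1 then c1 else if r = 2 then c2 else if r = 3 then c3 else 0)"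
  unfolding lincomb3_def by (rule eq_vecI) (simp_all add: unit_vec_def)

lemma lincomb3_unit_vec_eq_zero:
  assumes "lincomb3 c1 c2 c3 (unit_vec 5 1) (unit_vec 5 2) (unit_vec 5 3) = 0\<^sub>v 5"
  shows "c1 = 0 \<and> c2 = 0 \<and> c3 = 0"
proof -
  have "vec 5 (\<lambda>r. if r = 1 then c1 else if r = 2 then c2 else if r = 3 then c3 else 0) $ r = 0"
    if "r < 5" for r
    using assms that unfolding lincomb3_unit_vec by simp
  from this[of 1] this[of 2] this[of 3] show ?thesis by simp
qed

lemma middle_subspace_eq_lincomb3:
  assumes "v \<in> middle_subspace"
  shows "v = lincomb3 (v $ 1) (v $ 2) (v $ 3) (unit_vec 5 1) (unit_vec 5 2) (unit_vec 5 3)"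
    (is "v = ?w")
proof (rule eq_vecI)
  from assms have v: "dim_vec v = 5" "v $ 0 = 0" "v $ 4 = 0"
    unfolding middle_subspace_def by auto
  then show "dim_vec v = dim_vec ?w"
    by simp
  fix r assume "r < dim_vec ?w"
  then have "r = 0 \<or> r = 1 \<or> r = 2 \<or> r = 3 \<or> r = 4"
    by auto
  with v show "v $ r = ?w $ r"
    unfolding lincomb3_unit_vec by auto
qed

lemma tau1_mult_unit_vec:
  assumes i: "i \<in> {1, 2, 3}" and j: "j < 3"
  shows "tau1 d f i *\<^sub>v unit_vec 5 (j + 1) =
    lincomb3 (tau1_1 d f i $$ (0, j)) (tau1_1 d f i $$ (1, j)) (tau1_1 d f i $$ (2, j))
      (unit_vec 5 1) (unit_vec 5 2) (unit_vec 5 3)"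
    (is "?lhs = ?rhs")
proof (rule eq_vecI)
  fix r assume "r < dim_vec ?rhs"
  then have r: "r < 5"
    by simp
  let ?e = "unit_vec 5 (j + 1) :: complex vec"
  have "?lhs $ r = (if r = i then d * ?e $ (i - 1) - ?e $ i + f * ?e $ (i + 1) else ?e $ r)"
    using j by (intro tau1_mult_vec_index r i) simp
  moreover have "i = 1 \<or> i = 2 \<or> i = 3" "j = 0 \<or> j = 1 \<or> j = 2"
    "r = 0 \<or> r = 1 \<or> r = 2 \<or> r = 3 \<or> r = 4"
    using i j r by auto
  ultimately show "?lhs $ r = ?rhs $ r"
    unfolding lincomb3_unit_vec by (elim disjE) (simp_all add: tau1_1_def mat_of_rows_list_def)
qed simp

theorem theorem3p3:
  fixes d f :: complex
  assumes "f \<noteq> 0"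
  shows "has_composition_factor d f (tau1_1 d f)"
proof -
  define e :: "nat \<Rightarrow> complex vec" where "e j = unit_vec 5 (j + 1)" for j
  have e: "e 0 = unit_vec 5 1" "e 1 = unit_vec 5 2" "e 2 = unit_vec 5 3"
    by (simp_all add: e_def)
  show ?thesis
  proof (rule has_composition_factor_of_invariant_subspace[where V = middle_subspace and b = e])
    show "csubspace 5 middle_subspace" by (rule csubspace_middle_subspace)
    show "tau1_invariant d f middle_subspace" by (rule tau1_invariant_middle_subspace)
    show "e j \<in> middle_subspace" if "j < 3" for j
      using that by (simp add: e_def middle_subspace_def)
    show "c1 = 0 \<and> c2 = 0 \<and> c3 = 0"
      if "lincomb3 c1 c2 c3 (e 0) (e 1) (e 2) = 0\<^sub>v 5" for c1 c2 c3
      using that unfolding e by (rule lincomb3_unit_vec_eq_zero)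
    show "\<exists>c1 c2 c3. v = lincomb3 c1 c2 c3 (e 0) (e 1) (e 2)" if "v \<in> middle_subspace" for v
      using middle_subspace_eq_lincomb3[OF that] unfolding e by blast
    show "tau1 d f i *\<^sub>v e j =
        lincomb3 (tau1_1 d f i $$ (0, j)) (tau1_1 d f i $$ (1, j)) (tau1_1 d f i $$ (2, j))
          (e 0) (e 1) (e 2)"
      if "i \<in> {1, 2, 3}" "j < 3" for i j
      using tau1_mult_unit_vec[OF that] unfolding e by (simp only: e_def)
  qed
qed

end
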